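(* Let $0<\mu<1/2$ be such that for every $\rho>0$ the spiral $t\mapsto(\rho\cos t,\rho\sin t,\mu\rho t)$ is self-expanded, and let $\alpha=\arccos(1/\sqrt5)$. There exists an integer $N\ge2$ such that for every $r_0>0$, setting $r=Nr_0$ and $\gamma(t)=(r\cos t,r\sin t,\mu rt)$, we have $C(\tau,\alpha)\cap\mathrm{Cyl}(r_0)=\emptyset$ for all $\tau\ge0$, where $\mathrm{Cyl}(r_0)=\{(x,y,z)\in\mathbb{R}^3:x^2+y^2=r_0^2,\ z\in\mathbb{R}\}$.
   Context: $\mathbb{R}^3$ carries the Euclidean inner product $\langle\cdot,\cdot\rangle$ and norm $\|\cdot\|$. A curve is self-expanded if for all $t_1\le t_2\le t_3$: $\|\gamma(t_1)-\gamma(t_2)\|\le\|\gamma(t_1)-\gamma(t_3)\|$. For $v\in\mathbb{S}^2$ and $\alpha\in[0,\pi)$, $C(v,\alpha)=\{u:\langle u,v\rangle>\|u\|\cos\alpha\}\cup\{0\}$, and $C(\tau,\alpha)=\gamma(\tau)+C\big(\gamma'(\tau)/\|\gamma'(\tau)\|,\alpha\big)$. *)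

theory Defs
  imports "HOL-Analysis.Analysis"
begin

definition self_expanded :: "(real \<Rightarrow> real^3) \<Rightarrow> bool" where
  "self_expanded \<gamma> \<longleftrightarrow>
     (\<forall>t1 t2 t3. t1 \<le> t2 \<and> t2 \<le> t3 \<longrightarrow> norm (\<gamma> t1 - \<gamma> t2) \<le> norm (\<gamma> t1 - \<gamma> t3))"

definition cone_set :: "real^3 \<Rightarrow> real \<Rightarrow> (real^3) set" where
  "cone_set v \<alpha> = {u. inner u v > norm u * cos \<alpha>} \<union> {0}"

definition curve_cone :: "(real \<Rightarrow> real^3) \<Rightarrow> real \<Rightarrow> real \<Rightarrow> (real^3) set" where
  "curve_cone \<gamma> \<tau> \<alpha> =
     (\<lambda>u. \<gamma> \<tau> + u) ` cone_set (vector_derivative \<gamma> (at \<tau>) /\<^sub>R norm (vector_derivative \<gamma> (at \<tau>))) \<alpha>"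

definition spiral :: "real \<Rightarrow> real \<Rightarrow> real \<Rightarrow> real^3" where
  "spiral \<mu> \<rho> t = vector [\<rho> * cos t, \<rho> * sin t, \<mu> * \<rho> * t]"

definition Cyl :: "real \<Rightarrow> (real^3) set" where
  "Cyl r0 = {p. (p$1)^2 + (p$2)^2 = r0^2}"

end

theory Submission imports Defs begin

text \<open>Write a displacement u from the point \<gamma>(\<tau>) of the spiral of radius r in the moving
frame of \<gamma>(\<tau>): radial component a, tangential component b, vertical component c.
Then \<open>\<langle>u, \<gamma>'(\<tau>)\<rangle> = r (b + \<mu> c)\<close> and \<open>\<parallel>\<gamma>'(\<tau>)\<parallel> = r \<surd>(1 + \<mu>\<^sup>2)\<close>, so u lies in the cone of
half-angle arccos(1/\<surd>5) iff \<open>\<surd>5 (b + \<mu> c) > \<surd>(1 + \<mu>\<^sup>2) \<parallel>u\<parallel>\<close>.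
If \<gamma>(\<tau>) + u lies on Cyl(r0) then \<open>(r + a)\<^sup>2 + b\<^sup>2 = r0\<^sup>2\<close>, hence \<open>|a| \<ge> r - r0\<close> and \<open>|b| \<le> r0\<close>:
for r large compared with r0 the radial component dominates, and completing the square
in c gives \<open>5 (b + \<mu> c)\<^sup>2 \<le> (1 + \<mu>\<^sup>2) \<parallel>u\<parallel>\<^sup>2\<close> as soon as \<open>11 r0\<^sup>2 \<le> (1 - 4\<mu>\<^sup>2) (r - r0)\<^sup>2\<close>.\<close>

lemma norm_vec3: "norm (u::real^3) = sqrt ((u$1)\<^sup>2 + (u$2)\<^sup>2 + (u$3)\<^sup>2)"
  by (simp add: norm_eq_sqrt_inner inner_vec_def sum_3 power2_eq_square)

lemma inner_vec3: "inner (u::real^3) v = u$1 * v$1 + u$2 * v$2 + u$3 * v$3"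
  by (simp add: inner_vec_def sum_3)

lemma vector3_eq_axis_sum:
  "(vector [x, y, z] :: real^3) = x *\<^sub>R axis 1 1 + y *\<^sub>R axis 2 1 + z *\<^sub>R axis 3 1"
  by (simp add: vec_eq_iff forall_3 axis_def)

lemma vector_derivative_spiral:
  "vector_derivative (spiral \<mu> \<rho>) (at t) = vector [-\<rho> * sin t, \<rho> * cos t, \<mu> * \<rho>]"
proof -
  have "((\<lambda>t. (\<rho> * cos t) *\<^sub>R (axis 1 1::real^3) + (\<rho> * sin t) *\<^sub>R axis 2 1 + (\<mu>*\<rho>*t) *\<^sub>R axis 3 1)
     has_vector_derivative
       ((-\<rho> * sin t) *\<^sub>R axis 1 1 + (\<rho> * cos t) *\<^sub>R axis 2 1 + (\<mu>*\<rho>) *\<^sub>R axis 3 1)) (at t)"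
    by (auto intro!: derivative_eq_intros simp: mult.commute)
  then have "(spiral \<mu> \<rho> has_vector_derivative vector [-\<rho> * sin t, \<rho> * cos t, \<mu> * \<rho>]) (at t)"
    unfolding spiral_def vector3_eq_axis_sum by (simp add: fun_eq_iff algebra_simps)
  then show ?thesis
    by (rule vector_derivative_at)
qed

lemma norm_vector_derivative_spiral:
  assumes "\<rho> \<ge> 0"
  shows "norm (vector_derivative (spiral \<mu> \<rho>) (at t)) = \<rho> * sqrt (1 + \<mu>\<^sup>2)"
proof -
  have "norm (vector_derivative (spiral \<mu> \<rho>) (at t)) = sqrt (\<rho>\<^sup>2 * (1 + \<mu>\<^sup>2))"
    unfolding norm_vec3 vector_derivative_spiral
    by (simp add: power_mult_distrib algebra_simps sin_squared_eq)
  then show ?thesis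
    using assms by (simp add: real_sqrt_mult)
qed

lemma spiral_frame:
  fixes u :: "real^3" and t :: real
  defines "a \<equiv> u$1 * cos t + u$2 * sin t" and "b \<equiv> - u$1 * sin t + u$2 * cos t"
  shows norm_in_spiral_frame: "norm u = sqrt (a\<^sup>2 + b\<^sup>2 + (u$3)\<^sup>2)"
    and inner_vector_derivative_spiral:
      "inner u (vector_derivative (spiral \<mu> r) (at t)) = r * (b + \<mu> * u$3)"
    and spiral_add_in_Cyl_iff: "spiral \<mu> r t + u \<in> Cyl r0 \<longleftrightarrow> (r + a)\<^sup>2 + b\<^sup>2 = r0\<^sup>2"
proof -
  have sc: "sin t * sin t + cos t * cos t = 1"
    using sin_cos_squared_add[of t] by (simp add: power2_eq_square)
  have "(u$1)\<^sup>2 + (u$2)\<^sup>2 = a\<^sup>2 + b\<^sup>2"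
    unfolding a_def b_def using sc by algebra
  then show "norm u = sqrt (a\<^sup>2 + b\<^sup>2 + (u$3)\<^sup>2)"
    by (simp add: norm_vec3)
  show "inner u (vector_derivative (spiral \<mu> r) (at t)) = r * (b + \<mu> * u$3)"
    unfolding inner_vec3 vector_derivative_spiral b_def by (simp add: algebra_simps)
  have "(r * cos t + u$1)\<^sup>2 + (r * sin t + u$2)\<^sup>2 = (r + a)\<^sup>2 + b\<^sup>2"
    unfolding a_def b_def using sc by algebra
  then show "spiral \<mu> r t + u \<in> Cyl r0 \<longleftrightarrow> (r + a)\<^sup>2 + b\<^sup>2 = r0\<^sup>2"
    by (simp add: Cyl_def spiral_def)
qed

lemma cos_arccos_inverse_sqrt5: "cos (arccos (1 / sqrt 5)) = 1 / sqrt 5"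
proof (rule cos_arccos)
  show "1 / sqrt 5 \<le> 1"
    by (simp add: field_simps)
  show "-1 \<le> 1 / sqrt 5"
    by (rule order.trans[of _ 0]) auto
qed

lemma in_cone_set_arccos_inverse_sqrt5:
  assumes "u \<in> cone_set (v /\<^sub>R norm v) (arccos (1 / sqrt 5))" and "u \<noteq> 0" and "v \<noteq> 0"
  shows "norm v * norm u < sqrt 5 * inner u v"
proof -
  have "norm u * (1 / sqrt 5) < inner u v / norm v"
    using assms(1,2) unfolding cone_set_def cos_arccos_inverse_sqrt5
    by (simp add: divide_inverse ac_simps)
  then show ?thesis
    using assms(3) by (simp add: field_simps)
qed

text \<open>After completing the square in c, the bound \<open>25 \<mu>\<^sup>2 < 7\<close> lets the constant 11 absorb
the remaining b-terms.\<close>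

lemma cone_quadratic_bound:
  fixes \<mu> a b c :: real
  assumes "\<mu>\<^sup>2 < 1/4" and "11 * b\<^sup>2 \<le> (1 - 4*\<mu>\<^sup>2) * a\<^sup>2"
  shows "sqrt 5 * (b + \<mu>*c) \<le> sqrt (1 + \<mu>\<^sup>2) * sqrt (a\<^sup>2 + b\<^sup>2 + c\<^sup>2)"
proof -
  define q where "q = 1 - 4*\<mu>\<^sup>2"
  have q: "0 < q" "q \<le> 1"
    using assms(1) by (auto simp: q_def)
  have "(4*q + 25*\<mu>\<^sup>2) * b\<^sup>2 \<le> 11 * b\<^sup>2"
    using q assms(1) by (intro mult_right_mono) auto
  also have "\<dots> \<le> q * a\<^sup>2"
    using assms(2) by (simp add: q_def)
  finally have radial: "4*b\<^sup>2 + 25*\<mu>\<^sup>2*b\<^sup>2/q \<le> a\<^sup>2"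
    using q by (simp add: field_simps)
  have "0 \<le> (q*c - 5*\<mu>*b)\<^sup>2 / q"
    using q by simp
  also have "\<dots> = q*c\<^sup>2 - 10*\<mu>*b*c + 25*\<mu>\<^sup>2*b\<^sup>2/q"
    using q by (simp add: field_simps power2_eq_square)
  finally have vertical: "- 25*\<mu>\<^sup>2*b\<^sup>2/q \<le> q*c\<^sup>2 - 10*\<mu>*b*c"
    by simp
  have "(1 + \<mu>\<^sup>2)*(a\<^sup>2 + b\<^sup>2 + c\<^sup>2) - 5*(b + \<mu>*c)\<^sup>2
      = (a\<^sup>2 - 4*b\<^sup>2) + \<mu>\<^sup>2*a\<^sup>2 + \<mu>\<^sup>2*b\<^sup>2 + (q*c\<^sup>2 - 10*\<mu>*b*c)"
    by (simp add: q_def algebra_simps power2_eq_square)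
  moreover have "0 \<le> \<mu>\<^sup>2*a\<^sup>2" "0 \<le> \<mu>\<^sup>2*b\<^sup>2"
    by auto
  ultimately have "sqrt (5*(b + \<mu>*c)\<^sup>2) \<le> sqrt ((1 + \<mu>\<^sup>2)*(a\<^sup>2 + b\<^sup>2 + c\<^sup>2))"
    using radial vertical by (intro real_sqrt_le_mono) linarith
  then have "sqrt 5 * \<bar>b + \<mu>*c\<bar> \<le> sqrt (1 + \<mu>\<^sup>2) * sqrt (a\<^sup>2 + b\<^sup>2 + c\<^sup>2)"
    by (simp add: real_sqrt_mult)
  moreover have "sqrt 5 * (b + \<mu>*c) \<le> sqrt 5 * \<bar>b + \<mu>*c\<bar>"
    by (intro mult_left_mono) auto
  ultimately show ?thesis
    by linarith
qed

lemma circle_offset_bounds: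
  fixes r r0 a b :: real
  assumes "(r + a)\<^sup>2 + b\<^sup>2 = r0\<^sup>2" and "0 \<le> r0" and "r0 \<le> r"
  shows "b\<^sup>2 \<le> r0\<^sup>2" and "(r - r0)\<^sup>2 \<le> a\<^sup>2"
proof -
  show "b\<^sup>2 \<le> r0\<^sup>2"
    using assms(1) by (metis le_add_same_cancel2 zero_le_power2)
  have "(r + a)\<^sup>2 \<le> r0\<^sup>2"
    using assms(1) by (metis le_add_same_cancel1 zero_le_power2)
  then have "\<bar>r + a\<bar> \<le> r0"
    using assms(2) by (metis abs_le_square_iff abs_of_nonneg)
  then have "\<bar>r - r0\<bar> \<le> \<bar>a\<bar>"
    using assms(3) by linarith
  then show "(r - r0)\<^sup>2 \<le> a\<^sup>2"
    by (simp add: abs_le_square_iff)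
qed

lemma curve_cone_spiral_disjoint_Cyl:
  fixes \<mu> r r0 \<tau> :: real
  assumes "\<mu>\<^sup>2 < 1/4" and "0 \<le> r0" and "r0 < r"
    and far: "11 * r0\<^sup>2 \<le> (1 - 4*\<mu>\<^sup>2) * (r - r0)\<^sup>2"
  shows "curve_cone (spiral \<mu> r) \<tau> (arccos (1 / sqrt 5)) \<inter> Cyl r0 = {}"
proof (rule ccontr)
  define v where "v = vector_derivative (spiral \<mu> r) (at \<tau>)"
  define a where "a u = u$1 * cos \<tau> + u$2 * sin \<tau>" for u :: "real^3"
  define b where "b u = - u$1 * sin \<tau> + u$2 * cos \<tau>" for u :: "real^3"
  have norm_v: "norm v = r * sqrt (1 + \<mu>\<^sup>2)"
    unfolding v_def using assms(3,2) by (intro norm_vector_derivative_spiral) simp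
  moreover have "0 < 1 + \<mu>\<^sup>2"
    by (simp add: add_pos_nonneg)
  ultimately have "v \<noteq> 0"
    using assms(2,3) by auto
  assume "curve_cone (spiral \<mu> r) \<tau> (arccos (1 / sqrt 5)) \<inter> Cyl r0 \<noteq> {}"
  then obtain u where cone: "u \<in> cone_set (v /\<^sub>R norm v) (arccos (1 / sqrt 5))"
    and on_Cyl: "(r + a u)\<^sup>2 + (b u)\<^sup>2 = r0\<^sup>2"
    unfolding curve_cone_def v_def a_def b_def by (auto simp: spiral_add_in_Cyl_iff)
  have "u \<noteq> 0"
  proof
    assume "u = 0"
    then have "r\<^sup>2 = r0\<^sup>2"
      using on_Cyl by (simp add: a_def b_def)
    then show False
      using assms(2,3) by (simp add: power2_eq_iff)
  qed
  then have "norm v * norm u < sqrt 5 * inner u v"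
    using cone \<open>v \<noteq> 0\<close> by (intro in_cone_set_arccos_inverse_sqrt5)
  also have "inner u v = r * (b u + \<mu> * u$3)"
    unfolding v_def b_def by (rule inner_vector_derivative_spiral)
  finally have "r * (sqrt (1 + \<mu>\<^sup>2) * norm u) < r * (sqrt 5 * (b u + \<mu> * u$3))"
    unfolding norm_v by (simp add: ac_simps)
  then have "sqrt (1 + \<mu>\<^sup>2) * norm u < sqrt 5 * (b u + \<mu> * u$3)"
    using assms(2,3) by simp
  moreover have "11 * (b u)\<^sup>2 \<le> (1 - 4*\<mu>\<^sup>2) * (a u)\<^sup>2"
  proof -
    have "11 * (b u)\<^sup>2 \<le> 11 * r0\<^sup>2"
      using circle_offset_bounds(1)[OF on_Cyl] assms by simp
    also have "\<dots> \<le> (1 - 4*\<mu>\<^sup>2) * (r - r0)\<^sup>2"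
      by (rule far)
    also have "\<dots> \<le> (1 - 4*\<mu>\<^sup>2) * (a u)\<^sup>2"
      using circle_offset_bounds(2)[OF on_Cyl] assms(1-3) by (intro mult_left_mono) auto
    finally show ?thesis .
  qed
  then have "sqrt 5 * (b u + \<mu> * u$3) \<le> sqrt (1 + \<mu>\<^sup>2) * norm u"
    unfolding norm_in_spiral_frame[of u \<tau>] a_def b_def
    by (rule cone_quadratic_bound[OF assms(1)])
  ultimately show False
    by linarith
qed

lemma ex_int_ge_2_quadratic_bound:
  fixes q c :: real
  assumes "0 < q"
  shows "\<exists>N::int. 2 \<le> N \<and> c \<le> q * (of_int N - 1)\<^sup>2"
proof (intro exI conjI)
  define K :: real where "K = of_int \<lceil>max 1 (c/q)\<rceil>"
  have "max 1 (c/q) \<le> K"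
    unfolding K_def by (rule le_of_int_ceiling)
  then have "1 \<le> K" and "c/q \<le> K"
    by simp_all
  then show "2 \<le> \<lceil>max 1 (c/q)\<rceil> + 1"
    by (simp add: K_def)
  have "c \<le> q * K"
    using assms \<open>c/q \<le> K\<close> by (simp add: field_simps)
  also have "\<dots> \<le> q * K\<^sup>2"
    using assms \<open>1 \<le> K\<close> by (simp add: power2_eq_square)
  finally show "c \<le> q * (of_int (\<lceil>max 1 (c/q)\<rceil> + 1) - 1)\<^sup>2"
    by (simp add: K_def)
qed

theorem lemma4p6:
  fixes \<mu> :: real
  assumes "0 < \<mu>" and "\<mu> < 1/2"
    and "\<forall>\<rho>>0. self_expanded (spiral \<mu> \<rho>)"
  shows "\<exists>N::int. N \<ge> 2 \<and>
           (\<forall>r0>0. \<forall>\<tau>\<ge>0.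
              curve_cone (spiral \<mu> (of_int N * r0)) \<tau> (arccos (1 / sqrt 5)) \<inter> Cyl r0 = {})"
proof -
  define q where "q = 1 - 4*\<mu>\<^sup>2"
  have "\<mu>\<^sup>2 < (1/2)\<^sup>2"
    using assms(1,2) by (intro power_strict_mono) auto
  then have \<mu>: "\<mu>\<^sup>2 < 1/4" and "0 < q"
    by (auto simp: q_def power2_eq_square)
  then obtain N :: int where "2 \<le> N" and N: "11 \<le> q * (of_int N - 1)\<^sup>2"
    using ex_int_ge_2_quadratic_bound by blast
  have far: "11 * r0\<^sup>2 \<le> q * (of_int N * r0 - r0)\<^sup>2" and outside: "r0 < of_int N * r0"
    if "0 < r0" for r0
  proof -
    have "11 * r0\<^sup>2 \<le> q * (of_int N - 1)\<^sup>2 * r0\<^sup>2"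
      using N by (intro mult_right_mono) auto
    also have "\<dots> = q * ((of_int N - 1) * r0)\<^sup>2"
      by (simp add: power_mult_distrib)
    finally show "11 * r0\<^sup>2 \<le> q * (of_int N * r0 - r0)\<^sup>2"
      by (simp add: algebra_simps)
    show "r0 < of_int N * r0"
      using \<open>2 \<le> N\<close> that by simp
  qed
  show ?thesis
  proof (intro exI[of _ N] conjI allI impI)
    fix r0 \<tau> :: real
    assume "0 < r0"
    with \<mu> far outside show "curve_cone (spiral \<mu> (of_int N * r0)) \<tau> (arccos (1 / sqrt 5)) \<inter> Cyl r0 = {}"
      by (intro curve_cone_spiral_disjoint_Cyl) (auto simp: q_def)
  qed fact
qed

end
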